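(* Let $\varphi$ be an $\mathrm{LTL_{PSL}}$ formula, $D=(I^+,I^-)$ a partition of the set $I$ of its subformulae of the form $s\preceq s'$, and $\varphi_D$ the associated formula. If the language of the generalised Büchi automaton $\mathcal{A}_{\varphi_D}$ is non-empty, then $\varphi_D$ is $\mathrm{SLTL}$-satisfiable.
   Context: Propositional variables $\mathcal{P}$ and standpoint symbols $\mathcal{S}$ (with universal symbol $*$) are countably infinite. SLTL formulae: $\varphi ::= p \mid s \preceq s' \mid \neg\varphi \mid \varphi\wedge\varphi \mid \Diamond_s\varphi \mid \Box_s\varphi \mid X\varphi \mid \varphi\,U\,\varphi$. A model is $M=(\Pi,\lambda)$ with $\Pi\neq\emptyset$ a set of traces $\sigma:\mathbb{N}\to 2^{\mathcal{P}}$, $\lambda:\mathcal{S}\to 2^{\Pi}\setminus\{\emptyset\}$, $\lambda( * )=\Pi$; $M,\sigma,i\models p$ iff $p\in\sigma(i)$; $s\preceq s'$ holds iff $\lambda(s)\subseteq\lambda(s')$; $\Diamond_s\psi$ (resp. $\Box_s\psi$) holds at $\sigma,i$ iff $\psi$ holds at $\sigma',i$ for some (resp. all) $\sigma'\in\lambda(s)$; $X\psi$ holds at $\sigma,i$ iff $\psi$ holds at $\sigma,i+1$; $\psi U\chi$ holds at $\sigma,i$ iff $\chi$ holds at some $\sigma,i'$, $i'\ge i$, and $\psi$ at $\sigma,i''$ for all $i\le i''<i'$. $G\psi:=\neg(\top U\neg\psi)$. Satisfiable: holds at $\sigma,0$ for some $M$, $\sigma\in\Pi$. $\mathrm{LTL_{PSL}}$: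 SLTL formulae with no $X$ or $U$ in the scope of any $\Diamond_s$ or $\Box_s$. $\varphi_D:=\varphi[I^+\mapsto\top,I^-\mapsto\bot]\wedge G\big(\bigwedge_{(s\preceq s')\in I^+}(s\preceq s')\wedge\bigwedge_{(s\preceq s')\in I^-}(\Diamond_s p_{s,s'}\wedge\neg\Diamond_{s'}p_{s,s'})\big)$, where members of $I^+$ (resp. $I^-$) are replaced by $\top$ (resp. $\bot$) and the $p_{s,s'}$ are fresh variables. PSL is the temporal-free fragment; a PSL model is $(\Pi,V)$ with $\Pi$ finite nonempty, $V:\mathcal{S}\cup\mathcal{P}\to 2^{\Pi}$, $V(s)\neq\emptyset$ for all $s$, $V( * )=\Pi$; $\pi\models p$ iff $\pi\in V(p)$, $s\preceq s'$ iff $V(s)\subseteq V(s')$, $\Diamond_s\psi$/$\Box_s\psi$ iff $\psi$ holds at some/all $\pi'\in V(s)$. The closure $cl(\varphi_D)$ is the smallest set containing all subformulae of $\varphi_D$, $\top$ and $\bot$, closed under negation (identifying $\neg\neg\psi$ with $\psi$), and such that $\psi U\psi'\in cl(\varphi_D)$ implies $X(\psi U\psi')\in cl(\varphi_D)$. $B\subseteq cl(\varphi_D)$ is maximally consistent if $\top\in B$, $\bot\notin B$; $\psi\in B$ iff $\neg\psi\notin B$ for $\neg\psi\in cl(\varphi_D)$; $\psi_1\wedge\psi_2\in B$ iff $\psi_1,\psi_2\in B$; $\psi_1U\psi_2\in B$ iff $\psi_2\in B$ or $\{\psi_1,X(\psi_1U\psi_2)\}\subseteq B$. $B$ is standpoint-consistent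 if the conjunction of the members of $B$ that are PSL formulae is PSL-satisfiable; $B$ is s-elementary if maximally consistent and standpoint-consistent. $\mathcal{A}_{\varphi_D}=(Q,2^{\mathcal{P}(\varphi_D)},\delta,Q_0,\mathcal{F})$ where $\mathcal{P}(\varphi_D)$ is the set of variables of $\varphi_D$; $Q$ is the set of s-elementary sets; $Q_0=\{B\in Q:\varphi_D\in B\}$; $\mathcal{F}$ contains, for each $\psi_1U\psi_2\in cl(\varphi_D)$, the set $\{B\in Q:\psi_1U\psi_2\notin B\text{ or }\psi_2\in B\}$; $\delta(B,A)=\emptyset$ if $A\neq B\cap\mathcal{P}(\varphi_D)$, and otherwise $\delta(B,A)$ is the set of $B'\in Q$ such that for every $X\psi\in cl(\varphi_D)$, $X\psi\in B$ iff $\psi\in B'$. An infinite word is accepted if it has a run starting in $Q_0$ that visits each set of $\mathcal{F}$ infinitely often. *)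

theory Defs
  imports Main
begin

text \<open>Propositional variables are natural numbers; standpoint symbols are a
countably infinite type with the distinguished universal standpoint Star.\<close>

datatype stp = Star | Sp nat

datatype fml =
    Prop nat
  | Prec stp stp
  | Neg fml
  | And fml fml
  | Dia stp fml
  | Box stp fml
  | Next fml
  | Until fml fml

definition ftop :: fml where "ftop = Prec Star Star"
definition fbot :: fml where "fbot = Neg ftop"

fun neg :: "fml \<Rightarrow> fml" where
  "neg (Neg \<psi>) = \<psi>"
| "neg \<psi> = Neg \<psi>"

definition fG :: "fml \<Rightarrow> fml" where
  "fG \<psi> = Neg (Until ftop (Neg \<psi>))"

definition bigAnd :: "fml list \<Rightarrow> fml" where
  "bigAnd xs = foldr And xs ftop"

fun subf :: "fml \<Rightarrow> fml set" where
  "subf (Prop p) = {Prop p}"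
| "subf (Prec s t) = {Prec s t}"
| "subf (Neg \<psi>) = insert (Neg \<psi>) (subf \<psi>)"
| "subf (And \<psi> \<chi>) = insert (And \<psi> \<chi>) (subf \<psi> \<union> subf \<chi>)"
| "subf (Dia s \<psi>) = insert (Dia s \<psi>) (subf \<psi>)"
| "subf (Box s \<psi>) = insert (Box s \<psi>) (subf \<psi>)"
| "subf (Next \<psi>) = insert (Next \<psi>) (subf \<psi>)"
| "subf (Until \<psi> \<chi>) = insert (Until \<psi> \<chi>) (subf \<psi> \<union> subf \<chi>)"

fun vars :: "fml \<Rightarrow> nat set" where
  "vars (Prop p) = {p}"
| "vars (Prec s t) = {}"
| "vars (Neg \<psi>) = vars \<psi>"
| "vars (And \<psi> \<chi>) = vars \<psi> \<union> vars \<chi>"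
| "vars (Dia s \<psi>) = vars \<psi>"
| "vars (Box s \<psi>) = vars \<psi>"
| "vars (Next \<psi>) = vars \<psi>"
| "vars (Until \<psi> \<chi>) = vars \<psi> \<union> vars \<chi>"

fun psl :: "fml \<Rightarrow> bool" where
  "psl (Prop p) = True"
| "psl (Prec s t) = True"
| "psl (Neg \<psi>) = psl \<psi>"
| "psl (And \<psi> \<chi>) = (psl \<psi> \<and> psl \<chi>)"
| "psl (Dia s \<psi>) = psl \<psi>"
| "psl (Box s \<psi>) = psl \<psi>"
| "psl (Next \<psi>) = False"
| "psl (Until \<psi> \<chi>) = False"

fun ltl_psl :: "fml \<Rightarrow> bool" where
  "ltl_psl (Prop p) = True"
| "ltl_psl (Prec s t) = True"
| "ltl_psl (Neg \<psi>) = ltl_psl \<psi>"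
| "ltl_psl (And \<psi> \<chi>) = (ltl_psl \<psi> \<and> ltl_psl \<chi>)"
| "ltl_psl (Dia s \<psi>) = psl \<psi>"
| "ltl_psl (Box s \<psi>) = psl \<psi>"
| "ltl_psl (Next \<psi>) = ltl_psl \<psi>"
| "ltl_psl (Until \<psi> \<chi>) = (ltl_psl \<psi> \<and> ltl_psl \<chi>)"

type_synonym trace = "nat \<Rightarrow> nat set"

text \<open>A model is given by lam; the set of traces is lam Star.\<close>
definition sltl_model :: "(stp \<Rightarrow> trace set) \<Rightarrow> bool" where
  "sltl_model lam \<longleftrightarrow> (\<forall>s. lam s \<noteq> {} \<and> lam s \<subseteq> lam Star)"

fun sem :: "(stp \<Rightarrow> trace set) \<Rightarrow> trace \<Rightarrow> nat \<Rightarrow> fml \<Rightarrow> bool" where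
  "sem lam \<sigma> i (Prop p) = (p \<in> \<sigma> i)"
| "sem lam \<sigma> i (Prec s t) = (lam s \<subseteq> lam t)"
| "sem lam \<sigma> i (Neg \<psi>) = (\<not> sem lam \<sigma> i \<psi>)"
| "sem lam \<sigma> i (And \<psi> \<chi>) = (sem lam \<sigma> i \<psi> \<and> sem lam \<sigma> i \<chi>)"
| "sem lam \<sigma> i (Dia s \<psi>) = (\<exists>\<sigma>'\<in>lam s. sem lam \<sigma>' i \<psi>)"
| "sem lam \<sigma> i (Box s \<psi>) = (\<forall>\<sigma>'\<in>lam s. sem lam \<sigma>' i \<psi>)"
| "sem lam \<sigma> i (Next \<psi>) = sem lam \<sigma> (Suc i) \<psi>"
| "sem lam \<sigma> i (Until \<psi> \<chi>) =
     (\<exists>i'\<ge>i. sem lam \<sigma> i' \<chi> \<and> (\<forall>i''. i \<le> i'' \<and> i'' < i' \<longrightarrow> sem lam \<sigma> i'' \<psi>))"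

definition sltl_sat :: "fml \<Rightarrow> bool" where
  "sltl_sat \<phi> \<longleftrightarrow> (\<exists>lam. sltl_model lam \<and> (\<exists>\<sigma>\<in>lam Star. sem lam \<sigma> 0 \<phi>))"

text \<open>Worlds are natural numbers (every finite world set embeds into nat).\<close>
fun psl_sem :: "(stp \<Rightarrow> nat set) \<Rightarrow> (nat \<Rightarrow> nat set) \<Rightarrow> nat \<Rightarrow> fml \<Rightarrow> bool" where
  "psl_sem Vs Vp \<pi> (Prop p) = (\<pi> \<in> Vp p)"
| "psl_sem Vs Vp \<pi> (Prec s t) = (Vs s \<subseteq> Vs t)"
| "psl_sem Vs Vp \<pi> (Neg \<psi>) = (\<not> psl_sem Vs Vp \<pi> \<psi>)"
| "psl_sem Vs Vp \<pi> (And \<psi> \<chi>) = (psl_sem Vs Vp \<pi> \<psi> \<and> psl_sem Vs Vp \<pi> \<chi>)"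
| "psl_sem Vs Vp \<pi> (Dia s \<psi>) = (\<exists>\<pi>'\<in>Vs s. psl_sem Vs Vp \<pi>' \<psi>)"
| "psl_sem Vs Vp \<pi> (Box s \<psi>) = (\<forall>\<pi>'\<in>Vs s. psl_sem Vs Vp \<pi>' \<psi>)"
| "psl_sem Vs Vp \<pi> (Next \<psi>) = False"
| "psl_sem Vs Vp \<pi> (Until \<psi> \<chi>) = False"

definition psl_model :: "(stp \<Rightarrow> nat set) \<Rightarrow> (nat \<Rightarrow> nat set) \<Rightarrow> bool" where
  "psl_model Vs Vp \<longleftrightarrow> finite (Vs Star) \<and> Vs Star \<noteq> {}
     \<and> (\<forall>s. Vs s \<noteq> {} \<and> Vs s \<subseteq> Vs Star) \<and> (\<forall>p. Vp p \<subseteq> Vs Star)"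

definition psl_sat_set :: "fml set \<Rightarrow> bool" where
  "psl_sat_set S \<longleftrightarrow> (\<exists>Vs Vp. psl_model Vs Vp \<and> (\<exists>\<pi>\<in>Vs Star. \<forall>\<psi>\<in>S. psl_sem Vs Vp \<pi> \<psi>))"

fun repl :: "(stp \<times> stp) set \<Rightarrow> (stp \<times> stp) set \<Rightarrow> fml \<Rightarrow> fml" where
  "repl Ip Im (Prop p) = Prop p"
| "repl Ip Im (Prec s t) =
     (if (s, t) \<in> Ip then ftop else if (s, t) \<in> Im then fbot else Prec s t)"
| "repl Ip Im (Neg \<psi>) = Neg (repl Ip Im \<psi>)"
| "repl Ip Im (And \<psi> \<chi>) = And (repl Ip Im \<psi>) (repl Ip Im \<chi>)"
| "repl Ip Im (Dia s \<psi>) = Dia s (repl Ip Im \<psi>)"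
| "repl Ip Im (Box s \<psi>) = Box s (repl Ip Im \<psi>)"
| "repl Ip Im (Next \<psi>) = Next (repl Ip Im \<psi>)"
| "repl Ip Im (Until \<psi> \<chi>) = Until (repl Ip Im \<psi>) (repl Ip Im \<chi>)"

definition precs :: "fml \<Rightarrow> (stp \<times> stp) set" where
  "precs \<phi> = {(s, t). Prec s t \<in> subf \<phi>}"

text \<open>phi_D, where I+ and I- are given as lists (fixing the order of the big
conjunctions) and fr gives the fresh variables p_{s,s'}.\<close>
definition phiD :: "fml \<Rightarrow> (stp \<times> stp) list \<Rightarrow> (stp \<times> stp) list \<Rightarrow> (stp \<Rightarrow> stp \<Rightarrow> nat) \<Rightarrow> fml" where
  "phiD \<phi> ip im fr =
     And (repl (set ip) (set im) \<phi>)
         (fG (And (bigAnd (map (\<lambda>(s, t). Prec s t) ip))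
                  (bigAnd (map (\<lambda>(s, t). And (Dia s (Prop (fr s t))) (Neg (Dia t (Prop (fr s t))))) im))))"

inductive_set cl :: "fml \<Rightarrow> fml set" for \<phi> :: fml where
  cl_sub: "\<psi> \<in> subf \<phi> \<Longrightarrow> \<psi> \<in> cl \<phi>"
| cl_top: "ftop \<in> cl \<phi>"
| cl_bot: "fbot \<in> cl \<phi>"
| cl_neg: "\<psi> \<in> cl \<phi> \<Longrightarrow> neg \<psi> \<in> cl \<phi>"
| cl_until: "Until \<psi> \<chi> \<in> cl \<phi> \<Longrightarrow> Next (Until \<psi> \<chi>) \<in> cl \<phi>"

definition max_cons :: "fml \<Rightarrow> fml set \<Rightarrow> bool" where
  "max_cons \<phi> B \<longleftrightarrow> B \<subseteq> cl \<phi> \<and> ftop \<in> B \<and> fbot \<notin> B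
     \<and> (\<forall>\<psi>. Neg \<psi> \<in> cl \<phi> \<longrightarrow> (\<psi> \<in> B \<longleftrightarrow> Neg \<psi> \<notin> B))
     \<and> (\<forall>\<psi> \<chi>. And \<psi> \<chi> \<in> cl \<phi> \<longrightarrow> (And \<psi> \<chi> \<in> B \<longleftrightarrow> \<psi> \<in> B \<and> \<chi> \<in> B))
     \<and> (\<forall>\<psi> \<chi>. Until \<psi> \<chi> \<in> cl \<phi> \<longrightarrow>
          (Until \<psi> \<chi> \<in> B \<longleftrightarrow> \<chi> \<in> B \<or> (\<psi> \<in> B \<and> Next (Until \<psi> \<chi>) \<in> B)))"

definition stp_cons :: "fml set \<Rightarrow> bool" where
  "stp_cons B \<longleftrightarrow> psl_sat_set {\<psi> \<in> B. psl \<psi>}"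

definition s_elem :: "fml \<Rightarrow> fml set \<Rightarrow> bool" where
  "s_elem \<phi> B \<longleftrightarrow> max_cons \<phi> B \<and> stp_cons B"

definition aQ :: "fml \<Rightarrow> fml set set" where
  "aQ \<phi> = {B. s_elem \<phi> B}"

definition aQ0 :: "fml \<Rightarrow> fml set set" where
  "aQ0 \<phi> = {B \<in> aQ \<phi>. \<phi> \<in> B}"

definition aF :: "fml \<Rightarrow> fml set set set" where
  "aF \<phi> = {{B \<in> aQ \<phi>. Until \<psi> \<chi> \<notin> B \<or> \<chi> \<in> B} | \<psi> \<chi>. Until \<psi> \<chi> \<in> cl \<phi>}"

definition adelta :: "fml \<Rightarrow> fml set \<Rightarrow> nat set \<Rightarrow> fml set set" where
  "adelta \<phi> B A =
     (if A \<noteq> {p \<in> vars \<phi>. Prop p \<in> B} then {}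
      else {B' \<in> aQ \<phi>. \<forall>\<psi>. Next \<psi> \<in> cl \<phi> \<longrightarrow> (Next \<psi> \<in> B \<longleftrightarrow> \<psi> \<in> B')})"

definition accepting_run :: "fml \<Rightarrow> (nat \<Rightarrow> nat set) \<Rightarrow> (nat \<Rightarrow> fml set) \<Rightarrow> bool" where
  "accepting_run \<phi> w r \<longleftrightarrow> r 0 \<in> aQ0 \<phi>
     \<and> (\<forall>i. r (Suc i) \<in> adelta \<phi> (r i) (w i))
     \<and> (\<forall>F\<in>aF \<phi>. \<exists>\<^sub>\<infinity>i. r i \<in> F)"

definition lang_nonempty :: "fml \<Rightarrow> bool" where
  "lang_nonempty \<phi> \<longleftrightarrow>
     (\<exists>w r. (\<forall>i. w i \<subseteq> vars \<phi>) \<and> accepting_run \<phi> w r)"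

end

theory Submission
  imports Defs "HOL-Library.Infinite_Set"
begin

(* Every state of an accepting run of A_phi_D is standpoint-consistent, so at
   each time i there is a finite PSL model of its PSL members.  The SLTL model takes as traces
   all paths that pick at every time a world of the corresponding PSL model, a trace lying in
   lambda(s) iff its world lies in s at every time.  A modal formula at time i then sees only
   the i-th PSL model, except that s <= t has a time-independent meaning; this is harmless
   because the only inclusions left in phi_D are those of I+ (the others became top or bot),
   and G(/\ I+) makes them true at every time.  The temporal operators are treated as in the
   LTL tableau construction, the acceptance condition fulfilling every eventuality. *)

lemma subf_refl [simp]: "\<psi> \<in> subf \<psi>"
  by (induction \<psi>) auto

lemma subf_trans: "\<chi> \<in> subf \<psi> \<Longrightarrow> subf \<chi> \<subseteq> subf \<psi>"
  by (induction \<psi>) auto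

lemma neg_cases: "neg \<psi> = Neg \<psi> \<or> \<psi> = Neg (neg \<psi>)"
  by (cases \<psi>) auto

lemma subf_ftop [simp]: "subf ftop = {ftop}"
  and subf_fbot [simp]: "subf fbot = {fbot, ftop}"
  by (simp_all add: ftop_def fbot_def)

lemma cl_subf: "\<psi> \<in> cl \<phi> \<Longrightarrow> subf \<psi> \<subseteq> cl \<phi>"
proof (induction rule: cl.induct)
  case (cl_sub \<psi>)
  then show ?case using subf_trans cl.cl_sub by blast
next
  case (cl_neg \<psi>)
  then show ?case using neg_cases[of \<psi>] cl.cl_neg[OF cl_neg.hyps] by (metis insert_subset subf.simps(3))
qed (auto intro: cl.intros)

lemma precs_simps [simp]:
  "precs (Prop p) = {}"
  "precs (Prec s t) = {(s, t)}"
  "precs (Neg \<psi>) = precs \<psi>"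
  "precs (And \<psi> \<chi>) = precs \<psi> \<union> precs \<chi>"
  "precs (Dia s \<psi>) = precs \<psi>"
  "precs (Box s \<psi>) = precs \<psi>"
  "precs (Next \<psi>) = precs \<psi>"
  "precs (Until \<psi> \<chi>) = precs \<psi> \<union> precs \<chi>"
  by (auto simp: precs_def)

lemma precs_ftop [simp]: "precs ftop = {(Star, Star)}"
  and precs_fbot [simp]: "precs fbot = {(Star, Star)}"
  by (simp_all add: ftop_def fbot_def)

lemma precs_neg [simp]: "precs (neg \<psi>) = precs \<psi>"
  by (cases \<psi>) auto

lemma precs_bigAnd: "precs (bigAnd xs) = insert (Star, Star) (\<Union>x\<in>set xs. precs x)"
  by (induction xs) (auto simp: bigAnd_def)

lemma precs_repl: "precs (repl Ip Im \<psi>) \<subseteq> insert (Star, Star) (precs \<psi> - (Ip \<union> Im))"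
  by (induction \<psi>) auto

lemma precs_cl: "\<psi> \<in> cl \<phi> \<Longrightarrow> precs \<psi> \<subseteq> insert (Star, Star) (precs \<phi>)"
proof (induction rule: cl.induct)
  case (cl_sub \<psi>)
  then show ?case using subf_trans by (fastforce simp: precs_def)
qed auto

lemma precs_phiD:
  assumes "precs \<phi> \<subseteq> set ip \<union> set im"
  shows "precs (phiD \<phi> ip im fr) \<subseteq> insert (Star, Star) (set ip)"
  using assms precs_repl[of "set ip" "set im" \<phi>]
  by (auto simp: phiD_def fG_def precs_bigAnd)

lemma psl_neg [simp]: "psl (neg \<psi>) = psl \<psi>"
  by (cases \<psi>) auto

lemma psl_sem_neg [simp]: "psl_sem Vs Vp \<pi> (neg \<psi>) = (\<not> psl_sem Vs Vp \<pi> \<psi>)"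
  by (cases \<psi>) auto

lemma ltl_psl_if_psl: "psl \<psi> \<Longrightarrow> ltl_psl \<psi>"
  by (induction \<psi>) auto

lemma psl_subf: "psl \<psi> \<Longrightarrow> \<chi> \<in> subf \<psi> \<Longrightarrow> psl \<chi>"
  by (induction \<psi>) auto

lemma ltl_psl_subf: "ltl_psl \<psi> \<Longrightarrow> \<chi> \<in> subf \<psi> \<Longrightarrow> ltl_psl \<chi>"
  by (induction \<psi>) (auto intro: ltl_psl_if_psl psl_subf)

lemma ltl_psl_neg [simp]: "ltl_psl (neg \<psi>) = ltl_psl \<psi>"
  by (cases \<psi>) auto

lemma ltl_psl_cl:
  assumes "ltl_psl \<phi>"
  shows "\<psi> \<in> cl \<phi> \<Longrightarrow> ltl_psl \<psi>"
  by (induction rule: cl.induct) (auto simp: ftop_def fbot_def intro: ltl_psl_subf assms)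

lemma ltl_psl_bigAnd: "ltl_psl (bigAnd xs) \<longleftrightarrow> (\<forall>x\<in>set xs. ltl_psl x)"
  by (induction xs) (auto simp: bigAnd_def ftop_def)

lemma psl_repl: "psl \<psi> \<Longrightarrow> psl (repl Ip Im \<psi>)"
  by (induction \<psi>) (auto simp: ftop_def fbot_def)

lemma ltl_psl_repl: "ltl_psl \<psi> \<Longrightarrow> ltl_psl (repl Ip Im \<psi>)"
  by (induction \<psi>) (auto simp: ftop_def fbot_def psl_repl)

lemma ltl_psl_phiD: "ltl_psl \<phi> \<Longrightarrow> ltl_psl (phiD \<phi> ip im fr)"
  by (auto simp: phiD_def fG_def ftop_def ltl_psl_bigAnd ltl_psl_repl)

lemma max_cons_ftop: "max_cons \<phi> B \<Longrightarrow> ftop \<in> B"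
  by (simp add: max_cons_def)

lemma max_cons_Neg: "max_cons \<phi> B \<Longrightarrow> Neg \<psi> \<in> cl \<phi> \<Longrightarrow> Neg \<psi> \<in> B \<longleftrightarrow> \<psi> \<notin> B"
  by (auto simp: max_cons_def)

lemma max_cons_neg:
  assumes "max_cons \<phi> B" and "\<psi> \<in> cl \<phi>"
  shows "neg \<psi> \<in> B \<longleftrightarrow> \<psi> \<notin> B"
  using neg_cases[of \<psi>] max_cons_Neg[OF assms(1)] cl_neg[OF assms(2)] assms(2) by metis

lemma max_cons_And:
  "max_cons \<phi> B \<Longrightarrow> And \<psi> \<chi> \<in> cl \<phi> \<Longrightarrow> And \<psi> \<chi> \<in> B \<longleftrightarrow> \<psi> \<in> B \<and> \<chi> \<in> B"
  by (simp add: max_cons_def)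

lemma max_cons_Until:
  "max_cons \<phi> B \<Longrightarrow> Until \<psi> \<chi> \<in> cl \<phi> \<Longrightarrow>
     Until \<psi> \<chi> \<in> B \<longleftrightarrow> \<chi> \<in> B \<or> (\<psi> \<in> B \<and> Next (Until \<psi> \<chi>) \<in> B)"
  by (simp add: max_cons_def)

lemma max_cons_bigAnd:
  assumes "max_cons \<phi> B" and "bigAnd xs \<in> cl \<phi>"
  shows "bigAnd xs \<in> B \<longleftrightarrow> (\<forall>x\<in>set xs. x \<in> B)"
  using assms(2)
proof (induction xs)
  case Nil
  then show ?case using max_cons_ftop[OF assms(1)] by (simp add: bigAnd_def)
next
  case (Cons x xs)
  then have c: "And x (bigAnd xs) \<in> cl \<phi>" by (simp add: bigAnd_def)
  then have "bigAnd xs \<in> cl \<phi>" using cl_subf[OF c] by auto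
  moreover have "bigAnd (x # xs) \<in> B \<longleftrightarrow> x \<in> B \<and> bigAnd xs \<in> B"
    using max_cons_And[OF assms(1) c] by (simp add: bigAnd_def)
  ultimately show ?case using Cons.IH by simp
qed

lemma psl_sem_iff_mem:
  assumes "max_cons \<phi> B" and "\<psi> \<in> cl \<phi>" and "psl \<psi>"
    and sat: "\<And>\<chi>. \<chi> \<in> B \<Longrightarrow> psl \<chi> \<Longrightarrow> psl_sem Vs Vp \<pi> \<chi>"
  shows "psl_sem Vs Vp \<pi> \<psi> \<longleftrightarrow> \<psi> \<in> B"
proof (cases "\<psi> \<in> B")
  case False
  then have "neg \<psi> \<in> B" using max_cons_neg[OF assms(1,2)] by blast
  then show ?thesis using sat[of "neg \<psi>"] \<open>psl \<psi>\<close> False by simp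
qed (use sat \<open>psl \<psi>\<close> in blast)

text \<open>Fairness rules out the solutions of the until-unfolding other than the least one.\<close>
lemma fair_unfolding_Until:
  fixes U A C :: "nat \<Rightarrow> bool"
  assumes unfold: "\<And>k. U k \<longleftrightarrow> C k \<or> (A k \<and> U (Suc k))"
    and fair: "\<exists>\<^sub>\<infinity>k. \<not> U k \<or> C k"
  shows "U i \<longleftrightarrow> (\<exists>j\<ge>i. C j \<and> (\<forall>k. i \<le> k \<and> k < j \<longrightarrow> A k))"
proof
  assume "U i"
  have "\<exists>j. i \<le> j \<and> C j"
  proof (rule ccontr)
    assume no_C: "\<nexists>j. i \<le> j \<and> C j"
    have "U k" if "i \<le> k" for k
      using that
    proof (induction k rule: dec_induct)
      case (step k)
      then show ?case using unfold[of k] no_C by blast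
    qed (fact \<open>U i\<close>)
    with no_C fair show False
      unfolding INFM_nat_le by auto
  qed
  then obtain j where j: "i \<le> j" "C j" and before: "\<And>k. k < j \<Longrightarrow> \<not> (i \<le> k \<and> C k)"
    using ex_least_nat_le[of "\<lambda>j. i \<le> j \<and> C j"] by blast
  have "k \<le> j \<longrightarrow> U k" if "i \<le> k" for k
    using that
  proof (induction k rule: dec_induct)
    case (step k)
    then show ?case using unfold[of k] before[of k] by auto
  qed (use \<open>U i\<close> in blast)
  then have "A k" if "i \<le> k" "k < j" for k
    using that unfold[of k] before[of k] by auto
  with j show "\<exists>j\<ge>i. C j \<and> (\<forall>k. i \<le> k \<and> k < j \<longrightarrow> A k)"
    by blast
next
  assume "\<exists>j\<ge>i. C j \<and> (\<forall>k. i \<le> k \<and> k < j \<longrightarrow> A k)"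
  then obtain j where "i \<le> j" "C j" and A: "\<And>k. i \<le> k \<Longrightarrow> k < j \<Longrightarrow> A k"
    by blast
  from \<open>i \<le> j\<close> show "U i"
  proof (induction i rule: inc_induct)
    case base
    then show ?case using \<open>C j\<close> unfold[of j] by blast
  next
    case (step k)
    then show ?case using A[of k] unfold[of k] by blast
  qed
qed

lemma accepting_run_s_elem: "accepting_run \<phi> w r \<Longrightarrow> s_elem \<phi> (r i)"
  by (cases i) (auto simp: accepting_run_def aQ0_def aQ_def adelta_def split: if_splits)

lemma accepting_run_max_cons: "accepting_run \<phi> w r \<Longrightarrow> max_cons \<phi> (r i)"
  using accepting_run_s_elem s_elem_def by blast

lemma accepting_run_Next:
  assumes "accepting_run \<phi> w r" and "Next \<psi> \<in> cl \<phi>"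
  shows "Next \<psi> \<in> r i \<longleftrightarrow> \<psi> \<in> r (Suc i)"
proof -
  have "r (Suc i) \<in> adelta \<phi> (r i) (w i)"
    using assms(1) by (simp add: accepting_run_def)
  with assms(2) show ?thesis
    by (auto simp: adelta_def split: if_splits)
qed

lemma accepting_run_Until:
  assumes run: "accepting_run \<phi> w r" and U: "Until \<psi> \<chi> \<in> cl \<phi>"
  shows "Until \<psi> \<chi> \<in> r i \<longleftrightarrow> (\<exists>j\<ge>i. \<chi> \<in> r j \<and> (\<forall>k. i \<le> k \<and> k < j \<longrightarrow> \<psi> \<in> r k))"
proof (rule fair_unfolding_Until)
  show "Until \<psi> \<chi> \<in> r k \<longleftrightarrow> \<chi> \<in> r k \<or> (\<psi> \<in> r k \<and> Until \<psi> \<chi> \<in> r (Suc k))" for k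
    using max_cons_Until[OF accepting_run_max_cons[OF run] U]
      accepting_run_Next[OF run cl_until[OF U]] by blast
  have "{B \<in> aQ \<phi>. Until \<psi> \<chi> \<notin> B \<or> \<chi> \<in> B} \<in> aF \<phi>"
    using U by (auto simp: aF_def)
  with run show "\<exists>\<^sub>\<infinity>k. Until \<psi> \<chi> \<notin> r k \<or> \<chi> \<in> r k"
    by (auto simp: accepting_run_def elim: INFM_mono)
qed

lemma accepting_run_G:
  assumes run: "accepting_run \<phi> w r" and "fG \<chi> \<in> cl \<phi>" and "fG \<chi> \<in> r i" and "i \<le> j"
  shows "\<chi> \<in> r j"
proof -
  have U: "Until ftop (Neg \<chi>) \<in> cl \<phi>" and N: "Neg \<chi> \<in> cl \<phi>"
    using cl_subf[OF \<open>fG \<chi> \<in> cl \<phi>\<close>] by (auto simp: fG_def)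
  have "Until ftop (Neg \<chi>) \<notin> r i"
    using assms(2,3) max_cons_Neg[OF accepting_run_max_cons[OF run]] by (simp add: fG_def)
  then have "Neg \<chi> \<notin> r j"
    using accepting_run_Until[OF run U] max_cons_ftop[OF accepting_run_max_cons[OF run]]
      \<open>i \<le> j\<close> by blast
  then show ?thesis
    using max_cons_Neg[OF accepting_run_max_cons[OF run] N] by blast
qed

definition world_paths :: "(nat \<Rightarrow> stp \<Rightarrow> nat set) \<Rightarrow> stp \<Rightarrow> (nat \<Rightarrow> nat) set" where
  "world_paths Vs s = {f. \<forall>i. f i \<in> Vs i s}"

definition path_trace :: "(nat \<Rightarrow> nat \<Rightarrow> nat set) \<Rightarrow> (nat \<Rightarrow> nat) \<Rightarrow> trace" where
  "path_trace Vp f = (\<lambda>i. {p. f i \<in> Vp i p})"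

definition path_model ::
    "(nat \<Rightarrow> stp \<Rightarrow> nat set) \<Rightarrow> (nat \<Rightarrow> nat \<Rightarrow> nat set) \<Rightarrow> stp \<Rightarrow> trace set" where
  "path_model Vs Vp s = path_trace Vp ` world_paths Vs s"

lemma world_paths_through:
  assumes nonempty: "\<And>i s. Vs i s \<noteq> {}" and "x \<in> Vs i s"
  shows "\<exists>f\<in>world_paths Vs s. f i = x"
proof
  let ?f = "\<lambda>j. if j = i then x else (SOME y. y \<in> Vs j s)"
  show "?f \<in> world_paths Vs s"
    using assms by (auto simp: world_paths_def some_in_eq)
qed simp

lemma sltl_model_path_model:
  assumes "\<And>i. psl_model (Vs i) (Vp i)"
  shows "sltl_model (path_model Vs Vp)"
proof -
  have nonempty: "\<And>i s. Vs i s \<noteq> {}" and below_Star: "\<And>i s. Vs i s \<subseteq> Vs i Star"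
    using assms by (auto simp: psl_model_def)
  have "world_paths Vs s \<noteq> {}" for s
    using world_paths_through[of Vs, OF nonempty] nonempty[of 0 s] by blast
  moreover have "world_paths Vs s \<subseteq> world_paths Vs Star" for s
    using below_Star by (auto simp: world_paths_def)
  ultimately show ?thesis
    by (auto simp: sltl_model_def path_model_def)
qed

text \<open>The SLTL meaning of \<open>s \<preceq> t\<close> does not depend on the time, hence the hypothesis on
  all times \<open>j\<close>.\<close>
lemma sem_path_model_psl:
  assumes nonempty: "\<And>i s. Vs i s \<noteq> {}" and "psl \<psi>"
    and "\<And>s t j. (s, t) \<in> precs \<psi> \<Longrightarrow> Vs j s \<subseteq> Vs j t"
  shows "sem (path_model Vs Vp) (path_trace Vp f) i \<psi> \<longleftrightarrow> psl_sem (Vs i) (Vp i) (f i) \<psi>"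
  using assms(2,3)
proof (induction \<psi> arbitrary: f)
  case (Prop p)
  then show ?case by (simp add: path_trace_def)
next
  case (Prec s t)
  then have "world_paths Vs s \<subseteq> world_paths Vs t" by (auto simp: world_paths_def)
  with Prec show ?case by (auto simp: path_model_def)
next
  case (Dia s \<psi>)
  then have IH: "\<And>g. sem (path_model Vs Vp) (path_trace Vp g) i \<psi> \<longleftrightarrow> psl_sem (Vs i) (Vp i) (g i) \<psi>"
    by simp
  show ?case
  proof
    assume "sem (path_model Vs Vp) (path_trace Vp f) i (Dia s \<psi>)"
    then show "psl_sem (Vs i) (Vp i) (f i) (Dia s \<psi>)"
      using IH by (auto simp: path_model_def world_paths_def)
  next
    assume "psl_sem (Vs i) (Vp i) (f i) (Dia s \<psi>)"
    then obtain x where "x \<in> Vs i s" "psl_sem (Vs i) (Vp i) x \<psi>" by auto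
    then show "sem (path_model Vs Vp) (path_trace Vp f) i (Dia s \<psi>)"
      using world_paths_through[OF nonempty] IH by (fastforce simp: path_model_def)
  qed
next
  case (Box s \<psi>)
  then have IH: "\<And>g. sem (path_model Vs Vp) (path_trace Vp g) i \<psi> \<longleftrightarrow> psl_sem (Vs i) (Vp i) (g i) \<psi>"
    by simp
  show ?case
  proof
    assume "sem (path_model Vs Vp) (path_trace Vp f) i (Box s \<psi>)"
    then show "psl_sem (Vs i) (Vp i) (f i) (Box s \<psi>)"
      using world_paths_through[OF nonempty] IH by (fastforce simp: path_model_def)
  next
    assume "psl_sem (Vs i) (Vp i) (f i) (Box s \<psi>)"
    then show "sem (path_model Vs Vp) (path_trace Vp f) i (Box s \<psi>)"
      using IH by (auto simp: path_model_def world_paths_def)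
  qed
qed auto

lemma accepting_run_psl_models:
  assumes "accepting_run \<phi> w r"
  obtains Vs Vp \<pi> where "\<And>i. psl_model (Vs i) (Vp i)" and "\<And>i. \<pi> i \<in> Vs i Star"
    and "\<And>i \<psi>. \<psi> \<in> r i \<Longrightarrow> psl \<psi> \<Longrightarrow> psl_sem (Vs i) (Vp i) (\<pi> i) \<psi>"
proof -
  have "\<forall>i. \<exists>Vs Vp \<pi>. psl_model Vs Vp \<and> \<pi> \<in> Vs Star \<and> (\<forall>\<psi>\<in>r i. psl \<psi> \<longrightarrow> psl_sem Vs Vp \<pi> \<psi>)"
    using accepting_run_s_elem[OF assms]
    by (fastforce simp: s_elem_def stp_cons_def psl_sat_set_def)
  then show ?thesis
    using that by metis
qed

lemma sem_path_model_iff_mem: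
  assumes run: "accepting_run \<phi> w r"
    and models: "\<And>i. psl_model (Vs i) (Vp i)"
    and sat: "\<And>i \<chi>. \<chi> \<in> r i \<Longrightarrow> psl \<chi> \<Longrightarrow> psl_sem (Vs i) (Vp i) (\<pi> i) \<chi>"
    and cl_ltl_psl: "\<And>\<chi>. \<chi> \<in> cl \<phi> \<Longrightarrow> ltl_psl \<chi>"
    and precs_hold: "\<And>s t i. Prec s t \<in> cl \<phi> \<Longrightarrow> Prec s t \<in> r i"
  shows "\<psi> \<in> cl \<phi> \<Longrightarrow> sem (path_model Vs Vp) (path_trace Vp \<pi>) i \<psi> \<longleftrightarrow> \<psi> \<in> r i"
proof -
  have mc: "\<And>i. max_cons \<phi> (r i)"
    using accepting_run_max_cons[OF run] .
  have psl_case: "sem (path_model Vs Vp) (path_trace Vp \<pi>) i \<psi> \<longleftrightarrow> \<psi> \<in> r i"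
    if "\<psi> \<in> cl \<phi>" "psl \<psi>" for \<psi> i
  proof -
    have "Vs j s \<subseteq> Vs j t" if "(s, t) \<in> precs \<psi>" for s t j
      using sat[OF precs_hold, of s t j] cl_subf[OF \<open>\<psi> \<in> cl \<phi>\<close>] that by (auto simp: precs_def)
    then have "sem (path_model Vs Vp) (path_trace Vp \<pi>) i \<psi> \<longleftrightarrow> psl_sem (Vs i) (Vp i) (\<pi> i) \<psi>"
      using sem_path_model_psl models \<open>psl \<psi>\<close> by (simp add: psl_model_def)
    also have "\<dots> \<longleftrightarrow> \<psi> \<in> r i"
      using psl_sem_iff_mem[OF mc that] sat by blast
    finally show ?thesis .
  qed
  show "\<psi> \<in> cl \<phi> \<Longrightarrow> sem (path_model Vs Vp) (path_trace Vp \<pi>) i \<psi> \<longleftrightarrow> \<psi> \<in> r i"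
  proof (induction \<psi> arbitrary: i)
    case (Prop p)
    show ?case by (rule psl_case[OF Prop.prems]) simp
  next
    case (Prec s t)
    show ?case by (rule psl_case[OF Prec.prems]) simp
  next
    case (Neg \<psi>)
    show ?case
    proof (cases "psl \<psi>")
      case False
      have "\<psi> \<in> cl \<phi>" using cl_subf[OF Neg.prems] by auto
      then show ?thesis using Neg.IH max_cons_Neg[OF mc Neg.prems] by simp
    qed (rule psl_case[OF Neg.prems], simp)
  next
    case (And \<psi> \<chi>)
    have "\<psi> \<in> cl \<phi>" "\<chi> \<in> cl \<phi>" using cl_subf[OF And.prems] by auto
    then show ?case using And.IH max_cons_And[OF mc And.prems] by simp
  next
    case (Dia s \<psi>)
    show ?case by (rule psl_case[OF Dia.prems]) (use cl_ltl_psl[OF Dia.prems] in simp)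
  next
    case (Box s \<psi>)
    show ?case by (rule psl_case[OF Box.prems]) (use cl_ltl_psl[OF Box.prems] in simp)
  next
    case (Next \<psi>)
    have "\<psi> \<in> cl \<phi>" using cl_subf[OF Next.prems] by auto
    then show ?case using Next.IH accepting_run_Next[OF run Next.prems] by simp
  next
    case (Until \<psi> \<chi>)
    have "\<psi> \<in> cl \<phi>" "\<chi> \<in> cl \<phi>" using cl_subf[OF Until.prems] by auto
    then show ?case using Until.IH accepting_run_Until[OF run Until.prems] by simp
  qed
qed

theorem sltl_sat_if_accepting_run:
  assumes run: "accepting_run \<phi> w r"
    and "\<And>\<chi>. \<chi> \<in> cl \<phi> \<Longrightarrow> ltl_psl \<chi>"
    and "\<And>s t i. Prec s t \<in> cl \<phi> \<Longrightarrow> Prec s t \<in> r i"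
  shows "sltl_sat \<phi>"
proof -
  obtain Vs Vp \<pi> where models: "\<And>i. psl_model (Vs i) (Vp i)" and "\<And>i. \<pi> i \<in> Vs i Star"
    and "\<And>i \<psi>. \<psi> \<in> r i \<Longrightarrow> psl \<psi> \<Longrightarrow> psl_sem (Vs i) (Vp i) (\<pi> i) \<psi>"
    using accepting_run_psl_models[OF run] by blast
  then have "sem (path_model Vs Vp) (path_trace Vp \<pi>) 0 \<psi> \<longleftrightarrow> \<psi> \<in> r 0" if "\<psi> \<in> cl \<phi>" for \<psi>
    using sem_path_model_iff_mem[OF run] assms(2,3) that by blast
  moreover have "\<phi> \<in> cl \<phi>" and "\<phi> \<in> r 0"
    using run by (auto simp: cl_sub accepting_run_def aQ0_def)
  moreover have "path_trace Vp \<pi> \<in> path_model Vs Vp Star"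
    using \<open>\<And>i. \<pi> i \<in> Vs i Star\<close> by (auto simp: path_model_def world_paths_def)
  ultimately show ?thesis
    using sltl_model_path_model[of Vs Vp, OF models] by (auto simp: sltl_sat_def)
qed

lemma accepting_run_phiD_precs:
  assumes "precs \<phi> \<subseteq> set ip \<union> set im"
    and run: "accepting_run (phiD \<phi> ip im fr) w r"
    and "Prec s t \<in> cl (phiD \<phi> ip im fr)"
  shows "Prec s t \<in> r i"
proof -
  define P where "P = phiD \<phi> ip im fr"
  define A where "A = bigAnd (map (\<lambda>(s, t). Prec s t) ip)"
  define N where "N = bigAnd (map (\<lambda>(s, t). And (Dia s (Prop (fr s t))) (Neg (Dia t (Prop (fr s t))))) im)"
  have mc: "\<And>i. max_cons P (r i)"
    using accepting_run_max_cons run P_def by blast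
  have "(s, t) \<in> insert (Star, Star) (set ip)"
    using precs_cl[OF assms(3)] precs_phiD[OF assms(1)] by auto
  then show ?thesis
  proof
    assume "(s, t) = (Star, Star)"
    then show ?thesis using max_cons_ftop[OF mc] by (simp add: ftop_def P_def)
  next
    assume st: "(s, t) \<in> set ip"
    have P: "P = And (repl (set ip) (set im) \<phi>) (fG (And A N))"
      by (simp add: P_def phiD_def A_def N_def)
    have "P \<in> cl P" and "P \<in> r 0"
      using run by (auto simp: cl_sub accepting_run_def aQ0_def P_def)
    moreover have "fG (And A N) \<in> subf P"
      unfolding P by simp
    ultimately have "fG (And A N) \<in> cl P"
      using cl_subf by blast
    moreover from this have "fG (And A N) \<in> r 0"
      using \<open>P \<in> r 0\<close> \<open>P \<in> cl P\<close> max_cons_And[OF mc] P by metis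
    ultimately have "And A N \<in> cl P" and "And A N \<in> r i"
      using cl_subf accepting_run_G run by (force simp: fG_def P_def)+
    then have "A \<in> cl P" "A \<in> r i"
      using cl_subf[of "And A N" P] max_cons_And[OF mc] by auto
    with st show ?thesis
      using max_cons_bigAnd[OF mc] by (force simp: A_def)
  qed
qed

theorem lemma5:
  fixes \<phi> :: fml and ip im :: "(stp \<times> stp) list" and fr :: "stp \<Rightarrow> stp \<Rightarrow> nat"
  assumes "ltl_psl \<phi>"
    and "set ip \<union> set im = precs \<phi>" and "set ip \<inter> set im = {}"
    and "distinct ip" and "distinct im"
    and "inj_on (\<lambda>(s, t). fr s t) (set im)"
    and "\<forall>(s, t) \<in> set im. fr s t \<notin> vars \<phi>"
    and "lang_nonempty (phiD \<phi> ip im fr)"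
  shows "sltl_sat (phiD \<phi> ip im fr)"
proof -
  \<comment> \<open>Disjointness of \<open>I+\<close> and \<open>I-\<close> and freshness of the \<open>p_{s,s'}\<close> only matter for the converse.\<close>
  from assms(8) obtain w r where run: "accepting_run (phiD \<phi> ip im fr) w r"
    by (auto simp: lang_nonempty_def)
  show ?thesis
  proof (rule sltl_sat_if_accepting_run[OF run])
    show "\<And>\<chi>. \<chi> \<in> cl (phiD \<phi> ip im fr) \<Longrightarrow> ltl_psl \<chi>"
      using ltl_psl_cl[OF ltl_psl_phiD[OF assms(1)]] .
    show "\<And>s t i. Prec s t \<in> cl (phiD \<phi> ip im fr) \<Longrightarrow> Prec s t \<in> r i"
      using accepting_run_phiD_precs[OF _ run] assms(2) by blast
  qed
qed

end
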